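(* Let $\vec p,\vec s$ be $n$-tuples with entries in $[1,\infty]$, $1\le\alpha\le\infty$, and $\frac1n\sum_{i=1}^n\frac1{s_i}\le\frac1\alpha\le\frac1n\sum_{i=1}^n\frac1{p_i}$. Then, as sets, $$(L^{\vec p},L^{\vec s})(\mathbb R^n)=(L^{\vec p},\ell^{\vec s})(\mathbb R^n)\quad\text{and}\quad (L^{\vec p},L^{\vec s})^{\alpha}(\mathbb R^n)=(L^{\vec p},\ell^{\vec s})^{\alpha}(\mathbb R^n).$$
   Context: For $\vec p=(p_1,\dots,p_n)$ with $1\le p_i\le\infty$, $\|f\|_{L^{\vec p}}=\Big(\int_{\mathbb R}\cdots\Big(\int_{\mathbb R}|f(x)|^{p_1}\,dx_1\Big)^{p_2/p_1}\cdots dx_n\Big)^{1/p_n}$ (usual modification when some $p_i=\infty$). $B(y,r)$ is the open ball of center $y$, radius $r$; $\chi_E$ is the characteristic function of $E$. Continuous spaces: $(L^{\vec p},L^{\vec s})$ is the set of $f\in L^1_{loc}(\mathbb R^n)$ with $\big\|\,y\mapsto\|f\chi_{B(y,1)}\|_{L^{\vec p}}\big\|_{L^{\vec s}}<\infty$; $(L^{\vec p},L^{\vec s})^{\alpha}$ is the set of $f\in L^1_{loc}$ with $\sup_{r>0}\big\|\,y\mapsto |B(y,r)|^{\frac1\alpha-\frac1n\sum_i\frac1{p_i}-\frac1n\sum_i\frac1{s_i}}\|f\chi_{B(y,r)}\|_{L^{\vec p}}\big\|_{L^{\vec s}}<\infty$. Discrete spaces: for $r>0$, $k\in\mathbb Z^n$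 let $Q_{r,k}=r(k+[0,1)^n)$; for $\{a_k\}_{k\in\mathbb Z^n}$ let $\|\{a_k\}\|_{\ell^{\vec s}}=\Big(\sum_{k_n\in\mathbb Z}\cdots\Big(\sum_{k_1\in\mathbb Z}|a_k|^{s_1}\Big)^{s_2/s_1}\cdots\Big)^{1/s_n}$ (usual modification for $s_i=\infty$). Set ${}_r\|f\|_{\vec p,\vec s}=\big\|\{\|f\chi_{Q_{r,k}}\|_{L^{\vec p}}\}_{k\in\mathbb Z^n}\big\|_{\ell^{\vec s}}$, $\|f\|_{\vec p,\vec s}={}_1\|f\|_{\vec p,\vec s}$ and $\|f\|_{\vec p,\vec s,\alpha}=\sup_{r>0}r^{\frac n\alpha-\sum_{i=1}^n\frac1{p_i}}\,{}_r\|f\|_{\vec p,\vec s}$. Then $(L^{\vec p},\ell^{\vec s})$ (resp. $(L^{\vec p},\ell^{\vec s})^{\alpha}$) is the set of $f\in L^1_{loc}(\mathbb R^n)$ with $\|f\|_{\vec p,\vec s}<\infty$ (resp. $\|f\|_{\vec p,\vec s,\alpha}<\infty$). *)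

theory Defs
  imports "HOL-Analysis.Analysis"
begin

text \<open>Points of R^n are represented as extensional functions nat => real on {..<n}
  (carrier PiE {..<n} UNIV); coordinate i (0-based) corresponds to x_(i+1) of the paper.
  Exponents are extended reals in [1,infinity] (type ennreal, infinity = top).\<close>

definition lebn :: "nat \<Rightarrow> (nat \<Rightarrow> real) measure" where
  "lebn n = completion (PiM {..<n} (\<lambda>_. lborel))"

definition origin :: "nat \<Rightarrow> nat \<Rightarrow> 'a::zero" where
  "origin n = (\<lambda>i. if i < n then 0 else undefined)"

definition epow :: "ennreal \<Rightarrow> real \<Rightarrow> ennreal" where
  "epow v q = (if v = top then top else ennreal (enn2real v powr q))"

definition einv :: "ennreal \<Rightarrow> real" where
  "einv p = (if p = top then 0 else 1 / enn2real p)"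

definition ess_sup :: "'a measure \<Rightarrow> ('a \<Rightarrow> ennreal) \<Rightarrow> ennreal" where
  "ess_sup M g = Inf {z. AE t in M. g t \<le> z}"

text \<open>Iterated mixed Lebesgue norm: integrates out coordinates 0,...,k-1 (innermost first).\<close>
fun mixL_aux :: "nat \<Rightarrow> (nat \<Rightarrow> ennreal) \<Rightarrow> ((nat \<Rightarrow> real) \<Rightarrow> ennreal) \<Rightarrow> (nat \<Rightarrow> real) \<Rightarrow> ennreal" where
  "mixL_aux 0 p g x = g x"
| "mixL_aux (Suc k) p g x =
     (if p k = top then ess_sup lebesgue (\<lambda>t. mixL_aux k p g (x(k := t)))
      else epow (\<integral>\<^sup>+ t. epow (mixL_aux k p g (x(k := t))) (enn2real (p k)) \<partial>lebesgue)
                (1 / enn2real (p k)))"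

definition mixL :: "nat \<Rightarrow> (nat \<Rightarrow> ennreal) \<Rightarrow> ((nat \<Rightarrow> real) \<Rightarrow> ennreal) \<Rightarrow> ennreal" where
  "mixL n p g = mixL_aux n p g (origin n)"

definition normL :: "nat \<Rightarrow> (nat \<Rightarrow> ennreal) \<Rightarrow> ((nat \<Rightarrow> real) \<Rightarrow> real) \<Rightarrow> ennreal" where
  "normL n p f = mixL n p (\<lambda>x. ennreal \<bar>f x\<bar>)"

fun mixl_aux :: "nat \<Rightarrow> (nat \<Rightarrow> ennreal) \<Rightarrow> ((nat \<Rightarrow> int) \<Rightarrow> ennreal) \<Rightarrow> (nat \<Rightarrow> int) \<Rightarrow> ennreal" where
  "mixl_aux 0 s a k = a k"
| "mixl_aux (Suc j) s a k =
     (if s j = top then (SUP t. mixl_aux j s a (k(j := t)))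
      else epow (\<integral>\<^sup>+ t. epow (mixl_aux j s a (k(j := t))) (enn2real (s j)) \<partial>count_space UNIV)
                (1 / enn2real (s j)))"

definition mixl :: "nat \<Rightarrow> (nat \<Rightarrow> ennreal) \<Rightarrow> ((nat \<Rightarrow> int) \<Rightarrow> ennreal) \<Rightarrow> ennreal" where
  "mixl n s a = mixl_aux n s a (origin n)"

definition balln :: "nat \<Rightarrow> (nat \<Rightarrow> real) \<Rightarrow> real \<Rightarrow> (nat \<Rightarrow> real) set" where
  "balln n y r = {x \<in> PiE {..<n} (\<lambda>_. UNIV). sqrt (\<Sum>i<n. (x i - y i)^2) < r}"

definition cuben :: "nat \<Rightarrow> real \<Rightarrow> (nat \<Rightarrow> int) \<Rightarrow> (nat \<Rightarrow> real) set" where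
  "cuben n r k = {x \<in> PiE {..<n} (\<lambda>_. UNIV). \<forall>i<n. r * of_int (k i) \<le> x i \<and> x i < r * (of_int (k i) + 1)}"

definition L1_loc :: "nat \<Rightarrow> ((nat \<Rightarrow> real) \<Rightarrow> real) \<Rightarrow> bool" where
  "L1_loc n f \<longleftrightarrow> f \<in> borel_measurable (lebn n) \<and>
     (\<forall>y\<in>PiE {..<n} (\<lambda>_. UNIV). \<forall>r>0. set_integrable (lebn n) (balln n y r) f)"

definition amalgamLL :: "nat \<Rightarrow> (nat \<Rightarrow> ennreal) \<Rightarrow> (nat \<Rightarrow> ennreal) \<Rightarrow> ((nat \<Rightarrow> real) \<Rightarrow> real) set" where
  "amalgamLL n p s = {f. L1_loc n f \<and>
     mixL n s (\<lambda>y. normL n p (\<lambda>x. f x * indicator (balln n y 1) x)) < top}"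

definition amalgamLL_alpha :: "nat \<Rightarrow> (nat \<Rightarrow> ennreal) \<Rightarrow> (nat \<Rightarrow> ennreal) \<Rightarrow> ennreal \<Rightarrow> ((nat \<Rightarrow> real) \<Rightarrow> real) set" where
  "amalgamLL_alpha n p s \<alpha> = {f. L1_loc n f \<and>
     (SUP r\<in>{0<..}. mixL n s (\<lambda>y.
        ennreal (measure (lebn n) (balln n y r) powr
                   (einv \<alpha> - (\<Sum>i<n. einv (p i)) / n - (\<Sum>i<n. einv (s i)) / n))
        * normL n p (\<lambda>x. f x * indicator (balln n y r) x))) < top}"

definition rnorm :: "nat \<Rightarrow> (nat \<Rightarrow> ennreal) \<Rightarrow> (nat \<Rightarrow> ennreal) \<Rightarrow> real \<Rightarrow> ((nat \<Rightarrow> real) \<Rightarrow> real) \<Rightarrow> ennreal" where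
  "rnorm n p s r f = mixl n s (\<lambda>k. normL n p (\<lambda>x. f x * indicator (cuben n r k) x))"

definition amalgamLl :: "nat \<Rightarrow> (nat \<Rightarrow> ennreal) \<Rightarrow> (nat \<Rightarrow> ennreal) \<Rightarrow> ((nat \<Rightarrow> real) \<Rightarrow> real) set" where
  "amalgamLl n p s = {f. L1_loc n f \<and> rnorm n p s 1 f < top}"

definition amalgamLl_alpha :: "nat \<Rightarrow> (nat \<Rightarrow> ennreal) \<Rightarrow> (nat \<Rightarrow> ennreal) \<Rightarrow> ennreal \<Rightarrow> ((nat \<Rightarrow> real) \<Rightarrow> real) set" where
  "amalgamLl_alpha n p s \<alpha> = {f. L1_loc n f \<and>
     (SUP r\<in>{0<..}. ennreal (r powr (real n * einv \<alpha> - (\<Sum>i<n. einv (p i)))) * rnorm n p s r f) < top}"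

end

theory Submission
  imports Defs "HOL-Probability.Essential_Supremum"
begin

text \<open>Both amalgam norms measure the local pieces of \<open>f\<close> by a mixed norm, over the balls
  \<open>B(y,r)\<close> in the continuous case and over the cubes \<open>Q(r,k)\<close> in the discrete case, and the
  two are comparable up to constants depending only on \<open>n\<close>. The ball \<open>B(y,r)\<close> is covered by
  the \<open>3\<^sup>n\<close> cubes \<open>Q(r,k)\<close> with \<open>k - \<lfloor>y/r\<rfloor> \<in> {-1,0,1}\<^sup>n\<close>; the cube \<open>Q(r,k)\<close> is covered by
  the \<open>n\<^sup>n\<close> cubes \<open>Q(r/n, nk+m)\<close> with \<open>m \<in> {0..n-1}\<^sup>n\<close>; and the cube of side \<open>r/n\<close>
  containing \<open>y\<close> lies in \<open>B(y,r)\<close>. The continuous mixed norm in \<open>y\<close> of a function of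
  \<open>\<lfloor>y/r\<rfloor>\<close> is \<open>r\<^bsup>\<Sigma> 1/s\<^sub>i\<^esup>\<close> times its discrete mixed norm, and discrete mixed norms do
  not increase under injective changes of the indices such as shifts and dilations.
  Finally \<open>|B(y,r)|\<close> is comparable to \<open>r\<^sup>n\<close>, so the weights of the \<open>\<alpha>\<close>-spaces are
  comparable to powers of \<open>r\<close>.\<close>

section \<open>Powers, essential suprema and \<open>L\<^sup>q\<close> norms on \<open>[0,\<infinity>]\<close>\<close>

lemma epow_top [simp]: "epow top q = top"
  by (simp add: epow_def)

lemma epow_zero [simp]: "q > 0 \<Longrightarrow> epow 0 q = 0"
  by (simp add: epow_def)

lemma epow_one [simp]: "epow a 1 = a"
  by (cases a) (auto simp: epow_def)

lemma epow_ennreal: "x \<ge> 0 \<Longrightarrow> epow (ennreal x) q = ennreal (x powr q)"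
  by (simp add: epow_def)

lemma epow_measurable [measurable]:
  assumes [measurable]: "f \<in> borel_measurable M"
  shows "(\<lambda>x. epow (f x) q) \<in> borel_measurable M"
  unfolding epow_def by measurable

lemma epow_mono:
  assumes "a \<le> b" "q > 0"
  shows "epow a q \<le> epow b q"
proof (cases "b = top")
  case False
  then have "a \<noteq> top"
    using assms top_unique by auto
  with False assms show ?thesis
    by (cases a; cases b) (auto simp: epow_def intro!: ennreal_leI powr_mono2)
qed simp

lemma epow_mult:
  assumes "q > 0"
  shows "epow (a * b) q = epow a q * epow b q"
  using assms
  by (cases a; cases b) (auto simp: epow_def ennreal_mult_top ennreal_top_mult ennreal_mult[symmetric] powr_mult)

lemma epow_epow: "q > 0 \<Longrightarrow> q' > 0 \<Longrightarrow> epow (epow a q) q' = epow a (q * q')"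
  by (cases a) (auto simp: epow_def powr_powr)

lemma epow_add_le:
  assumes "q > 0"
  shows "epow (a + b) q \<le> epow 2 q * (epow a q + epow b q)"
proof -
  have "epow (a + b) q \<le> epow (2 * max a b) q"
    using assms by (intro epow_mono) (auto simp: mult_2 intro: add_mono)
  also have "\<dots> = epow 2 q * epow (max a b) q"
    using assms by (rule epow_mult)
  also have "epow (max a b) q \<le> epow a q + epow b q"
    by (cases "a \<le> b") (auto simp: max_def intro: add_increasing add_increasing2)
  finally show ?thesis
    by (simp add: mult_left_mono)
qed

lemma epow_two_inverse_le: "q \<ge> 1 \<Longrightarrow> epow 2 (1 / q) \<le> 2"
  using powr_mono[of "1 / q" 1 "2::real"]
  by (simp add: epow_def) (metis ennreal_leI ennreal_numeral)

lemma ess_sup_count_space: "ess_sup (count_space UNIV) G = (SUP t. G t)"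
  unfolding ess_sup_def AE_count_space
  by (rule antisym) (auto intro!: Inf_lower Inf_greatest SUP_upper SUP_least)

lemma ess_sup_le_of_AE: "AE t in M. G t \<le> z \<Longrightarrow> ess_sup M G \<le> z"
  unfolding ess_sup_def by (rule Inf_lower) simp

lemma AE_le_ess_sup: "G \<in> borel_measurable M \<Longrightarrow> AE t in M. G t \<le> ess_sup M G"
  using esssup_AE[of G M] esssup_eq_AE[of G M] by (simp add: ess_sup_def)

lemma ess_sup_le_iff:
  "G \<in> borel_measurable M \<Longrightarrow> ess_sup M G \<le> z \<longleftrightarrow> (AE t in M. G t \<le> z)"
  using ess_sup_le_of_AE[of G z M] AE_le_ess_sup[of G M]
  by (auto elim: eventually_mono intro: order_trans)

lemma ess_sup_mono:
  assumes "\<And>t. t \<in> space M \<Longrightarrow> G t \<le> H t"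
  shows "ess_sup M G \<le> ess_sup M H"
  unfolding ess_sup_def
proof (rule Inf_mono)
  fix z
  assume "z \<in> {z. AE t in M. H t \<le> z}"
  then have H: "AE t in M. H t \<le> z"
    by simp
  have "AE t in M. G t \<le> z"
    using H AE_space by eventually_elim (use assms order_trans in blast)
  then show "\<exists>z'\<in>{z. AE t in M. G t \<le> z}. z' \<le> z"
    by auto
qed

lemma ess_sup_cmult_le:
  "G \<in> borel_measurable M \<Longrightarrow> ess_sup M (\<lambda>t. c * G t) \<le> c * ess_sup M G"
  using AE_le_ess_sup[of G M]
  by (intro ess_sup_le_of_AE) (auto elim!: eventually_mono intro: mult_left_mono)

lemma ess_sup_cmult:
  assumes [measurable]: "G \<in> borel_measurable M" and "c < top"
  shows "ess_sup M (\<lambda>t. c * G t) = c * ess_sup M G"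
proof (cases "c = 0")
  case True
  then show ?thesis
    using ess_sup_cmult_le[of G M 0] by simp
next
  case False
  then obtain x where x: "c = ennreal x" "x > 0"
    using assms(2) by (cases c) (auto simp: top_unique)
  have "c * ess_sup M G = c * ess_sup M (\<lambda>t. ennreal (1 / x) * (c * G t))"
    using x by (simp add: mult.assoc[symmetric] ennreal_mult[symmetric])
  also have "\<dots> \<le> c * (ennreal (1 / x) * ess_sup M (\<lambda>t. c * G t))"
    by (intro mult_left_mono ess_sup_cmult_le) auto
  also have "\<dots> = ess_sup M (\<lambda>t. c * G t)"
    using x by (simp add: mult.assoc[symmetric] ennreal_mult[symmetric])
  finally show ?thesis
    using ess_sup_cmult_le[OF assms(1)] by (intro antisym)
qed

lemma ess_sup_add_le:
  assumes "G \<in> borel_measurable M" "H \<in> borel_measurable M"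
  shows "ess_sup M (\<lambda>t. G t + H t) \<le> ess_sup M G + ess_sup M H"
proof (rule ess_sup_le_of_AE)
  show "AE t in M. G t + H t \<le> ess_sup M G + ess_sup M H"
    using AE_le_ess_sup[OF assms(1)] AE_le_ess_sup[OF assms(2)]
    by eventually_elim (rule add_mono)
qed

definition lq_norm :: "'a measure \<Rightarrow> ennreal \<Rightarrow> ('a \<Rightarrow> ennreal) \<Rightarrow> ennreal" where
  "lq_norm M q G = (if q = top then ess_sup M G
     else epow (\<integral>\<^sup>+ t. epow (G t) (enn2real q) \<partial>M) (1 / enn2real q))"

lemma mixL_aux_Suc: "mixL_aux (Suc k) p g x = lq_norm lebesgue (p k) (\<lambda>t. mixL_aux k p g (x(k := t)))"
  by (simp add: lq_norm_def)

lemma mixl_aux_Suc: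
  "mixl_aux (Suc j) s a k = lq_norm (count_space UNIV) (s j) (\<lambda>t. mixl_aux j s a (k(j := t)))"
  by (simp add: lq_norm_def ess_sup_count_space)

declare mixL_aux.simps(2) [simp del] mixl_aux.simps(2) [simp del]

lemma enn2real_ge_1: "1 \<le> q \<Longrightarrow> q \<noteq> top \<Longrightarrow> 1 \<le> enn2real q"
  using enn2real_mono[of 1 q] by (simp add: less_top)

lemma lq_norm_one: "lq_norm M 1 G = (\<integral>\<^sup>+ t. G t \<partial>M)"
  by (simp add: lq_norm_def)

lemma lq_norm_zero: "1 \<le> q \<Longrightarrow> lq_norm M q (\<lambda>_. 0) = 0"
  using ess_sup_le_of_AE[of "\<lambda>_. 0" 0 M] enn2real_ge_1[of q]
  by (auto simp: lq_norm_def)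

lemma lq_norm_mono:
  assumes "1 \<le> q" "\<And>t. t \<in> space M \<Longrightarrow> G t \<le> H t"
  shows "lq_norm M q G \<le> lq_norm M q H"
  using assms enn2real_ge_1[of q]
  by (auto simp: lq_norm_def intro!: ess_sup_mono epow_mono nn_integral_mono)

lemma lq_norm_cmult:
  assumes [measurable]: "G \<in> borel_measurable M" and "c < top" "1 \<le> q"
  shows "lq_norm M q (\<lambda>t. c * G t) = c * lq_norm M q G"
proof (cases "q = top")
  case False
  define Q where "Q = enn2real q"
  have Q: "Q \<ge> 1"
    using enn2real_ge_1 assms False by (simp add: Q_def)
  have "lq_norm M q (\<lambda>t. c * G t) = epow (\<integral>\<^sup>+ t. epow c Q * epow (G t) Q \<partial>M) (1 / Q)"
    using False Q by (simp add: lq_norm_def Q_def epow_mult)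
  also have "\<dots> = epow (epow c Q * (\<integral>\<^sup>+ t. epow (G t) Q \<partial>M)) (1 / Q)"
    by (subst nn_integral_cmult) measurable
  also have "\<dots> = c * lq_norm M q G"
    using False Q by (simp add: lq_norm_def Q_def epow_mult epow_epow)
  finally show ?thesis .
qed (use assms in \<open>simp add: lq_norm_def ess_sup_cmult\<close>)

lemma lq_norm_add_le:
  assumes [measurable]: "G \<in> borel_measurable M" "H \<in> borel_measurable M" and "1 \<le> q"
  shows "lq_norm M q (\<lambda>t. G t + H t) \<le> 4 * (lq_norm M q G + lq_norm M q H)"
proof (cases "q = top")
  case True
  then have "lq_norm M q (\<lambda>t. G t + H t) \<le> lq_norm M q G + lq_norm M q H"
    by (simp add: lq_norm_def ess_sup_add_le)
  also have "\<dots> \<le> 4 * (lq_norm M q G + lq_norm M q H)"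
    using mult_right_mono[of 1 4 "lq_norm M q G + lq_norm M q H"] by simp
  finally show ?thesis .
next
  case False
  define Q where "Q = enn2real q"
  have Q: "Q \<ge> 1"
    using enn2real_ge_1 assms False by (simp add: Q_def)
  define X where "X = (\<integral>\<^sup>+ t. epow (G t) Q \<partial>M)"
  define Y where "Y = (\<integral>\<^sup>+ t. epow (H t) Q \<partial>M)"
  have "(\<integral>\<^sup>+ t. epow (G t + H t) Q \<partial>M) \<le> (\<integral>\<^sup>+ t. epow 2 Q * (epow (G t) Q + epow (H t) Q) \<partial>M)"
    using Q by (intro nn_integral_mono epow_add_le) auto
  also have "\<dots> = epow 2 Q * (X + Y)"
    unfolding X_def Y_def by (subst nn_integral_cmult; (subst nn_integral_add)?) measurable
  finally have "lq_norm M q (\<lambda>t. G t + H t) \<le> epow (epow 2 Q * (X + Y)) (1 / Q)"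
    using False Q by (auto simp: lq_norm_def Q_def intro: epow_mono)
  also have "\<dots> = 2 * epow (X + Y) (1 / Q)"
    using Q by (simp add: epow_mult epow_epow)
  also have "epow (X + Y) (1 / Q) \<le> epow 2 (1 / Q) * (epow X (1 / Q) + epow Y (1 / Q))"
    using Q by (intro epow_add_le) auto
  also have "\<dots> \<le> 2 * (epow X (1 / Q) + epow Y (1 / Q))"
    using epow_two_inverse_le[OF Q] by (rule mult_right_mono) simp
  also have "2 * (2 * (epow X (1 / Q) + epow Y (1 / Q))) = 4 * (lq_norm M q G + lq_norm M q H)"
    using False by (simp add: lq_norm_def Q_def X_def Y_def mult.assoc[symmetric])
  finally show ?thesis
    by (simp add: mult_left_mono)
qed

lemma lq_norm_top_indicator:
  assumes A: "A \<in> sets M" and "1 \<le> q"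
  shows "lq_norm M q (\<lambda>t. top * indicator A t) = (if emeasure M A = 0 then 0 else top)"
proof (cases "q = top")
  case True
  have le_iff: "ess_sup M (\<lambda>t. top * indicator A t) \<le> z \<longleftrightarrow> emeasure M A = 0"
    if "z < top" for z
  proof -
    have "top * indicator A t \<le> z \<longleftrightarrow> t \<notin> A" for t
      using that by (auto simp: indicator_def top_unique)
    then have "ess_sup M (\<lambda>t. top * indicator A t) \<le> z \<longleftrightarrow> (AE t in M. t \<notin> A)"
      using A by (subst ess_sup_le_iff) auto
    also have "\<dots> \<longleftrightarrow> emeasure M A = 0"
      using AE_iff_measurable[OF A, of "\<lambda>t. t \<notin> A"] sets.sets_into_space[OF A] by auto
    finally show ?thesis .
  qed
  show ?thesis
    using True le_iff[of 0] le_iff[of "ess_sup M (\<lambda>t. top * indicator A t)"]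
    by (auto simp: lq_norm_def less_top[symmetric])
next
  case False
  define Q where "Q = enn2real q"
  have Q: "Q \<ge> 1"
    using enn2real_ge_1 assms False by (simp add: Q_def)
  have "(\<lambda>t. epow (top * indicator A t) Q) = (\<lambda>t. top * indicator A t)"
    using Q by (auto simp: indicator_def fun_eq_iff)
  then have "lq_norm M q (\<lambda>t. top * indicator A t) = epow (top * emeasure M A) (1 / Q)"
    using False A by (simp add: lq_norm_def Q_def nn_integral_cmult_indicator)
  then show ?thesis
    using Q by (auto simp: ennreal_top_mult)
qed

section \<open>The continuous iterated mixed norm\<close>

abbreviation lborelN :: "nat \<Rightarrow> (nat \<Rightarrow> real) measure" where
  "lborelN n \<equiv> PiM {..<n} (\<lambda>_. lborel)"

interpretation lborelN: product_sigma_finite "\<lambda>_::nat. lborel :: real measure"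
  by (simp add: product_sigma_finite_def sigma_finite_lborel)

lemma space_lborelN: "space (lborelN n) = PiE {..<n} (\<lambda>_. UNIV)"
  by (simp add: space_PiM)

lemma origin_in_space_lborelN: "origin n \<in> space (lborelN n)"
  by (auto simp: space_lborelN origin_def PiE_iff extensional_def)

lemma fun_upd_in_space_lborelN: "x \<in> space (lborelN n) \<Longrightarrow> k < n \<Longrightarrow> x(k := t) \<in> space (lborelN n)"
  by (auto simp: space_lborelN PiE_iff extensional_def)

lemma measurable_fun_upd_lborelN:
  assumes "k < n" "x \<in> space (lborelN n)"
  shows "(\<lambda>t. x(k := t)) \<in> measurable lborel (lborelN n)"
  using assms by (intro measurable_PiM_single') (auto simp: space_lborelN PiE_iff extensional_def)

lemma measurable_fun_upd_pair_lborelN: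
  assumes "k < n"
  shows "(\<lambda>(x, t). x(k := t)) \<in> measurable (lborelN n \<Otimes>\<^sub>M lborel) (lborelN n)"
  using measurable_add_dim[of k "{..<n}" "\<lambda>_. lborel"] assms by (simp add: insert_absorb)

lemma borel_measurable_slice_lebesgue:
  assumes "h \<in> borel_measurable (lborelN n)" "k < n" "x \<in> space (lborelN n)"
  shows "(\<lambda>t. h (x(k := t))) \<in> borel_measurable lebesgue"
  using measurable_comp[OF measurable_fun_upd_lborelN[OF assms(2,3)] assms(1)]
  by (intro measurable_completion) (simp add: o_def)

lemma mixL_aux_mono:
  assumes "\<And>y. y \<in> space (lborelN n) \<Longrightarrow> g y \<le> h y" "\<forall>i<k. 1 \<le> p i" "k \<le> n"
    "x \<in> space (lborelN n)"
  shows "mixL_aux k p g x \<le> mixL_aux k p h x"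
  using assms(2-)
proof (induction k arbitrary: x)
  case (Suc k)
  then show ?case
    unfolding mixL_aux_Suc by (intro lq_norm_mono) (auto intro!: Suc.IH fun_upd_in_space_lborelN)
qed (use assms(1) in simp)

lemma mixL_mono:
  "(\<And>y. y \<in> space (lborelN n) \<Longrightarrow> g y \<le> h y) \<Longrightarrow> \<forall>i<n. 1 \<le> p i \<Longrightarrow> mixL n p g \<le> mixL n p h"
  unfolding mixL_def by (rule mixL_aux_mono[OF _ _ le_refl origin_in_space_lborelN])

text \<open>For \<open>p\<^sub>k = \<infinity>\<close> the essential supremum of the slices is measurable because
  \<open>ess_sup \<le> c\<close> says that a section of a measurable set of \<open>\<real>\<^sup>n \<times> \<real>\<close> is null.\<close>

lemma mixL_aux_measurable:
  assumes "g \<in> borel_measurable (lborelN n)" "\<forall>i<k. 1 \<le> p i" "k \<le> n"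
  shows "mixL_aux k p g \<in> borel_measurable (lborelN n)"
  using assms(2-)
proof (induction k)
  case (Suc k)
  have IH[measurable]: "mixL_aux k p g \<in> borel_measurable (lborelN n)"
    using Suc by auto
  have kn: "k < n"
    using Suc by auto
  define F where "F x t = mixL_aux k p g (x(k := t))" for x t
  have F[measurable]: "case_prod F \<in> borel_measurable (lborelN n \<Otimes>\<^sub>M lborel)"
    unfolding F_def using measurable_comp[OF measurable_fun_upd_pair_lborelN[OF kn] IH]
    by (simp add: o_def case_prod_beta')
  have F_slice: "F x \<in> borel_measurable lborel" if "x \<in> space (lborelN n)" for x
    unfolding F_def using measurable_comp[OF measurable_fun_upd_lborelN[OF kn that] IH]
    by (simp add: o_def)
  show ?case
  proof (cases "p k = top")
    case False
    have "(\<lambda>x. \<integral>\<^sup>+ t. epow (F x t) (enn2real (p k)) \<partial>lborel) \<in> borel_measurable (lborelN n)"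
      by measurable
    then show ?thesis
      using False by (simp add: mixL_aux_Suc lq_norm_def F_def nn_integral_completion)
  next
    case True
    have "(\<lambda>x. ess_sup lebesgue (F x)) \<in> borel_measurable (lborelN n)"
    proof (rule borel_measurableI_le)
      fix c
      let ?Q = "{xt \<in> space (lborelN n \<Otimes>\<^sub>M lborel). c < case_prod F xt}"
      have "{x \<in> space (lborelN n). ess_sup lebesgue (F x) \<le> c}
          = {x \<in> space (lborelN n). emeasure lborel (Pair x -` ?Q) = 0}"
      proof (intro Collect_cong conj_cong refl)
        fix x
        assume x: "x \<in> space (lborelN n)"
        have "ess_sup lebesgue (F x) \<le> c \<longleftrightarrow> (AE t in lborel. F x t \<le> c)"
          using ess_sup_le_iff[OF measurable_completion[OF F_slice[OF x]]] AE_completion_iff by simp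
        also have "\<dots> \<longleftrightarrow> emeasure lborel {t \<in> space lborel. \<not> F x t \<le> c} = 0"
          by (rule AE_iff_measurable) (use F_slice[OF x] in auto)
        also have "{t \<in> space lborel. \<not> F x t \<le> c} = Pair x -` ?Q"
          using x by (auto simp: space_pair_measure not_le)
        finally show "ess_sup lebesgue (F x) \<le> c \<longleftrightarrow> emeasure lborel (Pair x -` ?Q) = 0" .
      qed
      also have "\<dots> \<in> sets (lborelN n)"
        using lborel.measurable_emeasure_Pair[of ?Q] by measurable
      finally show "{x \<in> space (lborelN n). ess_sup lebesgue (F x) \<le> c} \<in> sets (lborelN n)" .
    qed
    then show ?thesis
      using True unfolding F_def by (simp add: mixL_aux_Suc lq_norm_def)
  qed
qed (use assms(1) in \<open>simp add: mixL_aux.simps(1)[abs_def]\<close>)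

lemma borel_measurable_mixL_aux_slice:
  assumes "g \<in> borel_measurable (lborelN n)" "\<forall>i<k. 1 \<le> p i" "k < n" "x \<in> space (lborelN n)"
  shows "(\<lambda>t. mixL_aux k p g (x(k := t))) \<in> borel_measurable lebesgue"
  using assms by (intro borel_measurable_slice_lebesgue mixL_aux_measurable) auto

lemma measurable_override_on_lborelN:
  assumes "k \<le> n" "x \<in> space (lborelN n)"
  shows "(\<lambda>z. override_on x z {..<k}) \<in> measurable (lborelN k) (lborelN n)"
proof (rule measurable_PiM_single')
  show "(\<lambda>z. override_on x z {..<k} i) \<in> measurable (lborelN k) lborel" if "i \<in> {..<n}" for i
    by (cases "i < k") auto
  show "(\<lambda>z. override_on x z {..<k}) \<in> space (lborelN k) \<rightarrow> (\<Pi>\<^sub>E i\<in>{..<n}. space lborel)"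
    using assms by (auto simp: space_lborelN override_on_def PiE_iff extensional_def)
qed

lemma mixL_aux_ones_eq_nn_integral:
  assumes [measurable]: "g \<in> borel_measurable (lborelN n)" and "k \<le> n" "x \<in> space (lborelN n)"
  shows "mixL_aux k (\<lambda>_. 1) g x = (\<integral>\<^sup>+ z. g (override_on x z {..<k}) \<partial>lborelN k)"
  using assms(2-)
proof (induction k arbitrary: x)
  case (Suc k)
  have step: "override_on (x(k := t)) z {..<k} = override_on x (z(k := t)) {..<Suc k}" for t z
    by (auto simp: override_on_def fun_eq_iff)
  have "mixL_aux (Suc k) (\<lambda>_. 1) g x = (\<integral>\<^sup>+ t. mixL_aux k (\<lambda>_. 1) g (x(k := t)) \<partial>lborel)"
    by (simp add: mixL_aux_Suc lq_norm_one nn_integral_completion)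
  also have "\<dots> = (\<integral>\<^sup>+ t. (\<integral>\<^sup>+ z. g (override_on x (z(k := t)) {..<Suc k}) \<partial>lborelN k) \<partial>lborel)"
  proof -
    have "mixL_aux k (\<lambda>_. 1) g (x(k := t))
        = (\<integral>\<^sup>+ z. g (override_on x (z(k := t)) {..<Suc k}) \<partial>lborelN k)" for t
      unfolding step[symmetric] using Suc.prems by (intro Suc.IH fun_upd_in_space_lborelN) auto
    then show ?thesis
      by simp
  qed
  also have "\<dots> = (\<integral>\<^sup>+ z. g (override_on x z {..<Suc k}) \<partial>lborelN (Suc k))"
    using measurable_comp[OF measurable_override_on_lborelN[OF Suc.prems] assms(1)]
    by (subst lborelN.product_nn_integral_insert_rev[symmetric]) (auto simp: lessThan_Suc o_def)
  finally show ?case .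
qed (simp add: PiM_empty)

text \<open>The iterated norms of \<open>\<infinity> \<cdot> 1\<^sub>Z\<close> only take the values \<open>0\<close> and \<open>\<infinity>\<close>, whatever the
  exponents; with all exponents equal to 1 they are computed by Tonelli's theorem.\<close>

lemma mixL_aux_top_indicator:
  assumes Z: "Z \<in> sets (lborelN n)" and "\<forall>i<k. 1 \<le> p i" "k \<le> n" "x \<in> space (lborelN n)"
  defines "G \<equiv> \<lambda>y. top * indicator Z y"
  shows "mixL_aux k p G x = mixL_aux k (\<lambda>_. 1) G x \<and> mixL_aux k (\<lambda>_. 1) G x \<in> {0, top}"
  using assms(2-4)
proof (induction k arbitrary: x)
  case (Suc k)
  have G[measurable]: "G \<in> borel_measurable (lborelN n)"
    using Z unfolding G_def by measurable
  define F where "F t = mixL_aux k (\<lambda>_. 1) G (x(k := t))" for t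
  have IH: "mixL_aux k p G (x(k := t)) = F t \<and> F t \<in> {0, top}" for t
    unfolding F_def using Suc by (intro Suc.IH fun_upd_in_space_lborelN) auto
  define A where "A = {t. F t = top}"
  have "F \<in> borel_measurable lebesgue"
    unfolding F_def using Suc by (intro borel_measurable_mixL_aux_slice) auto
  then have "{t \<in> space lebesgue. F t = top} \<in> sets lebesgue"
    by measurable
  then have A: "A \<in> sets lebesgue"
    by (simp add: A_def)
  have F_eq: "F = (\<lambda>t. top * indicator A t)"
    using IH by (auto simp: fun_eq_iff A_def indicator_def)
  have "mixL_aux (Suc k) p G x = lq_norm lebesgue (p k) F"
    by (simp add: mixL_aux_Suc IH[THEN conjunct1])
  moreover have "mixL_aux (Suc k) (\<lambda>_. 1) G x = lq_norm lebesgue 1 F"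
    unfolding mixL_aux_Suc F_def ..
  ultimately have "mixL_aux (Suc k) p G x = lq_norm lebesgue (p k) (\<lambda>t. top * indicator A t)"
    "mixL_aux (Suc k) (\<lambda>_. 1) G x = lq_norm lebesgue 1 (\<lambda>t. top * indicator A t)"
    by (simp_all add: F_eq)
  then show ?case
    using lq_norm_top_indicator[OF A, of "p k"] lq_norm_top_indicator[OF A, of 1] Suc.prems by auto
qed (simp add: G_def indicator_def)

lemma mixL_null:
  assumes [measurable]: "Z \<in> sets (lborelN n)" "emeasure (lborelN n) Z = 0" "\<forall>i<n. 1 \<le> p i"
  shows "mixL n p (\<lambda>y. top * indicator Z y) = 0"
proof -
  have "mixL n p (\<lambda>y. top * indicator Z y) = mixL_aux n (\<lambda>_. 1) (\<lambda>y. top * indicator Z y) (origin n)"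
    using mixL_aux_top_indicator[OF assms(1,3) le_refl origin_in_space_lborelN] by (simp add: mixL_def)
  also have "\<dots> = (\<integral>\<^sup>+ z. top * indicator Z (override_on (origin n) z {..<n}) \<partial>lborelN n)"
    by (intro mixL_aux_ones_eq_nn_integral[OF _ le_refl origin_in_space_lborelN]) measurable
  also have "\<dots> = (\<integral>\<^sup>+ z. top * indicator Z z \<partial>lborelN n)"
  proof (intro nn_integral_cong)
    fix z
    assume "z \<in> space (lborelN n)"
    then have "override_on (origin n) z {..<n} = z"
      by (auto simp: override_on_def origin_def space_lborelN PiE_iff extensional_def fun_eq_iff)
    then show "top * indicator Z (override_on (origin n) z {..<n}) = top * indicator Z z"
      by simp
  qed
  also have "\<dots> = 0"
    using assms by (simp add: nn_integral_cmult_indicator)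
  finally show ?thesis .
qed

lemma mixL_aux_zero: "\<forall>i<k. 1 \<le> p i \<Longrightarrow> mixL_aux k p (\<lambda>_. 0) x = 0"
  by (induction k arbitrary: x) (simp_all add: mixL_aux_Suc lq_norm_zero)

lemma mixL_aux_cmult:
  assumes g: "g \<in> borel_measurable (lborelN n)" and "c < top" "\<forall>i<k. 1 \<le> p i" "k \<le> n"
    "x \<in> space (lborelN n)"
  shows "mixL_aux k p (\<lambda>y. c * g y) x = c * mixL_aux k p g x"
  using assms(3-)
proof (induction k arbitrary: x)
  case (Suc k)
  then show ?case
    unfolding mixL_aux_Suc
    by (simp add: fun_upd_in_space_lborelN lq_norm_cmult assms(2) borel_measurable_mixL_aux_slice[OF g])
qed simp

lemma mixL_cmult:
  "g \<in> borel_measurable (lborelN n) \<Longrightarrow> c < top \<Longrightarrow> \<forall>i<n. 1 \<le> p i \<Longrightarrow>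
    mixL n p (\<lambda>y. c * g y) = c * mixL n p g"
  unfolding mixL_def by (rule mixL_aux_cmult[OF _ _ _ le_refl origin_in_space_lborelN])

lemma mixL_aux_add_le:
  assumes g: "g \<in> borel_measurable (lborelN n)" and h: "h \<in> borel_measurable (lborelN n)"
    and "\<forall>i<k. 1 \<le> p i" "k \<le> n" "x \<in> space (lborelN n)"
  shows "mixL_aux k p (\<lambda>y. g y + h y) x \<le> 4 ^ k * (mixL_aux k p g x + mixL_aux k p h x)"
  using assms(3-)
proof (induction k arbitrary: x)
  case (Suc k)
  have pk: "1 \<le> p k"
    using Suc by auto
  define G where "G t = mixL_aux k p g (x(k := t))" for t
  define H where "H t = mixL_aux k p h (x(k := t))" for t
  have [measurable]: "G \<in> borel_measurable lebesgue" "H \<in> borel_measurable lebesgue"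
    unfolding G_def H_def using Suc by (auto intro!: borel_measurable_mixL_aux_slice g h)
  have "mixL_aux (Suc k) p (\<lambda>y. g y + h y) x \<le> lq_norm lebesgue (p k) (\<lambda>t. 4 ^ k * (G t + H t))"
    unfolding mixL_aux_Suc G_def H_def
    using Suc by (intro lq_norm_mono pk) (auto intro!: Suc.IH fun_upd_in_space_lborelN)
  also have "\<dots> = 4 ^ k * lq_norm lebesgue (p k) (\<lambda>t. G t + H t)"
    by (rule lq_norm_cmult) (auto simp: pk power_less_top_ennreal)
  also have "\<dots> \<le> 4 ^ k * (4 * (lq_norm lebesgue (p k) G + lq_norm lebesgue (p k) H))"
    by (intro mult_left_mono lq_norm_add_le pk) auto
  also have "\<dots> = 4 ^ Suc k * (mixL_aux (Suc k) p g x + mixL_aux (Suc k) p h x)"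
    unfolding mixL_aux_Suc G_def H_def by (simp only: power_Suc) (simp add: algebra_simps)
  finally show ?case .
qed simp

lemma mixL_sum_le:
  assumes "finite S" "\<And>m. m \<in> S \<Longrightarrow> g m \<in> borel_measurable (lborelN n)" and p: "\<forall>i<n. 1 \<le> p i"
  shows "mixL n p (\<lambda>y. \<Sum>m\<in>S. g m y) \<le> (4 ^ n) ^ card S * (\<Sum>m\<in>S. mixL n p (g m))"
  using assms(1,2)
proof (induction S rule: finite_induct)
  case empty
  then show ?case
    using mixL_aux_zero[OF p] by (simp add: mixL_def)
next
  case (insert m S)
  let ?C = "4 ^ n :: ennreal"
  have "mixL n p (\<lambda>y. \<Sum>m\<in>insert m S. g m y) = mixL n p (\<lambda>y. g m y + (\<Sum>m\<in>S. g m y))"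
    using insert by simp
  also have "\<dots> \<le> ?C * (mixL n p (g m) + mixL n p (\<lambda>y. \<Sum>m\<in>S. g m y))"
    unfolding mixL_def using insert
    by (intro mixL_aux_add_le[OF _ _ p le_refl origin_in_space_lborelN]) auto
  also have "\<dots> \<le> ?C * (?C ^ card S * mixL n p (g m) + ?C ^ card S * (\<Sum>m\<in>S. mixL n p (g m)))"
    using insert mult_right_mono[of 1 "?C ^ card S" "mixL n p (g m)"]
    by (intro mult_left_mono add_mono) (auto simp: one_le_power)
  also have "\<dots> = ?C ^ card (insert m S) * (\<Sum>m\<in>insert m S. mixL n p (g m))"
    using insert by (simp add: distrib_left mult.assoc)
  finally show ?case .
qed

section \<open>Step functions and the discrete mixed norm\<close>

lemma floor_divide_eq_iff:
  fixes r t :: real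
  assumes "r > 0"
  shows "\<lfloor>t / r\<rfloor> = m \<longleftrightarrow> r * of_int m \<le> t \<and> t < r * (of_int m + 1)"
  using assms by (simp add: floor_eq_iff field_simps)

lemma nn_integral_lborel_floor_divide:
  fixes F :: "int \<Rightarrow> ennreal" and r :: real
  assumes r: "r > 0"
  shows "(\<integral>\<^sup>+ t. F \<lfloor>t / r\<rfloor> \<partial>lborel) = ennreal r * (\<integral>\<^sup>+ m. F m \<partial>count_space UNIV)"
proof -
  define I where "I m = {r * of_int m ..< r * (of_int m + 1)}" for m :: int
  have mem_I: "t \<in> I m \<longleftrightarrow> m = \<lfloor>t / r\<rfloor>" for t m
    using floor_divide_eq_iff[OF r, of t m] by (auto simp: I_def)
  have "F \<lfloor>t / r\<rfloor> = (\<integral>\<^sup>+ m. F m * indicator (I m) t \<partial>count_space UNIV)" for t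
  proof -
    have "(\<lambda>m. F m * indicator (I m) t) = (\<lambda>m. F \<lfloor>t / r\<rfloor> * indicator {\<lfloor>t / r\<rfloor>} m)"
      by (auto simp: fun_eq_iff indicator_def mem_I)
    then show ?thesis
      by (simp add: nn_integral_cmult_indicator)
  qed
  then have "(\<integral>\<^sup>+ t. F \<lfloor>t / r\<rfloor> \<partial>lborel)
      = (\<integral>\<^sup>+ t. (\<integral>\<^sup>+ m. F m * indicator (I m) t \<partial>count_space UNIV) \<partial>lborel)"
    by simp
  also have "\<dots> = (\<integral>\<^sup>+ m. (\<integral>\<^sup>+ t. F m * indicator (I m) t \<partial>lborel) \<partial>count_space UNIV)"
  proof (rule pair_sigma_finite.Fubini')
    show "pair_sigma_finite (count_space (UNIV :: int set)) lborel"
      by (simp add: pair_sigma_finite_def sigma_finite_measure_count_space sigma_finite_lborel)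
    have "(\<lambda>x. (\<lambda>m x. F m * indicator (I m) (snd x)) (fst x) x)
        \<in> borel_measurable (count_space UNIV \<Otimes>\<^sub>M lborel)"
      by (rule measurable_compose_countable'[where I=UNIV]) (auto simp: I_def)
    then show "(\<lambda>(m, t). F m * indicator (I m) t) \<in> borel_measurable (count_space UNIV \<Otimes>\<^sub>M lborel)"
      by (simp add: case_prod_beta')
  qed
  also have "\<dots> = (\<integral>\<^sup>+ m. ennreal r * F m \<partial>count_space UNIV)"
    using r by (intro nn_integral_cong) (simp add: nn_integral_cmult_indicator I_def field_simps mult.commute)
  finally show ?thesis
    by (simp add: nn_integral_cmult)
qed

lemma ess_sup_floor_divide:
  fixes F :: "int \<Rightarrow> ennreal" and r :: real
  assumes r: "r > 0"
  shows "ess_sup lebesgue (\<lambda>t. F \<lfloor>t / r\<rfloor>) = (SUP m. F m)"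
proof (rule antisym)
  show "ess_sup lebesgue (\<lambda>t. F \<lfloor>t / r\<rfloor>) \<le> (SUP m. F m)"
    by (rule ess_sup_le_of_AE) (auto intro: SUP_upper)
  show "(SUP m. F m) \<le> ess_sup lebesgue (\<lambda>t. F \<lfloor>t / r\<rfloor>)"
  proof (rule SUP_least)
    fix m :: int
    define I where "I = {r * of_int m ..< r * (of_int m + 1)}"
    have "(\<lambda>t. F \<lfloor>t / r\<rfloor>) \<in> borel_measurable lebesgue"
      by (rule measurable_completion) measurable
    then have "AE t in lebesgue. F \<lfloor>t / r\<rfloor> \<le> ess_sup lebesgue (\<lambda>t. F \<lfloor>t / r\<rfloor>)"
      by (rule AE_le_ess_sup)
    moreover have "\<not> (AE t in lebesgue. t \<notin> I)"
    proof -
      have "I \<in> sets lebesgue" "{t \<in> space lebesgue. \<not> t \<notin> I} = I"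
        by (auto simp: I_def)
      moreover have "emeasure lebesgue I = ennreal r"
        using r by (simp add: I_def emeasure_completion field_simps)
      ultimately show ?thesis
        using r AE_iff_measurable[of I lebesgue "\<lambda>t. t \<notin> I"] by auto
    qed
    ultimately obtain t where "t \<in> I" "F \<lfloor>t / r\<rfloor> \<le> ess_sup lebesgue (\<lambda>t. F \<lfloor>t / r\<rfloor>)"
      by (metis (mono_tags, lifting) eventually_mono)
    then show "F m \<le> ess_sup lebesgue (\<lambda>t. F \<lfloor>t / r\<rfloor>)"
      using floor_divide_eq_iff[OF r, of t m] by (simp add: I_def)
  qed
qed

lemma lq_norm_floor_divide:
  fixes F :: "int \<Rightarrow> ennreal" and r :: real
  assumes r: "r > 0" and q: "1 \<le> q"
  shows "lq_norm lebesgue q (\<lambda>t. F \<lfloor>t / r\<rfloor>) = ennreal (r powr einv q) * lq_norm (count_space UNIV) q F"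
proof (cases "q = top")
  case True
  then show ?thesis
    using r by (simp add: lq_norm_def einv_def ess_sup_floor_divide ess_sup_count_space)
next
  case False
  define Q where "Q = enn2real q"
  have Q: "Q \<ge> 1"
    using enn2real_ge_1 q False by (simp add: Q_def)
  have "lq_norm lebesgue q (\<lambda>t. F \<lfloor>t / r\<rfloor>)
      = epow (ennreal r * (\<integral>\<^sup>+ m. epow (F m) Q \<partial>count_space UNIV)) (1 / Q)"
    using False nn_integral_lborel_floor_divide[OF r, of "\<lambda>m. epow (F m) Q"]
    by (simp add: lq_norm_def Q_def nn_integral_completion)
  also have "\<dots> = ennreal (r powr (1 / Q)) * epow (\<integral>\<^sup>+ m. epow (F m) Q \<partial>count_space UNIV) (1 / Q)"
    using Q r by (simp add: epow_mult epow_ennreal)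
  finally show ?thesis
    using False by (simp add: lq_norm_def Q_def einv_def)
qed

definition cube_index :: "nat \<Rightarrow> real \<Rightarrow> (nat \<Rightarrow> real) \<Rightarrow> (nat \<Rightarrow> int)" where
  "cube_index n r y = (\<lambda>i. if i < n then \<lfloor>y i / r\<rfloor> else undefined)"

lemma cube_index_fun_upd:
  "k < n \<Longrightarrow> cube_index n r (x(k := t)) = (cube_index n r x)(k := \<lfloor>t / r\<rfloor>)"
  by (auto simp: cube_index_def fun_eq_iff)

lemma cube_index_origin: "cube_index n r (origin n) = origin n"
  by (auto simp: cube_index_def origin_def fun_eq_iff)

lemma mixL_aux_step_function:
  assumes r: "r > 0" and "\<forall>i<k. 1 \<le> s i" "k \<le> n"
  shows "mixL_aux k s (\<lambda>y. h (cube_index n r y)) x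
    = ennreal (r powr (\<Sum>i<k. einv (s i))) * mixl_aux k s h (cube_index n r x)"
  using assms(2,3)
proof (induction k arbitrary: x)
  case (Suc k)
  define c where "c = ennreal (r powr (\<Sum>i<k. einv (s i)))"
  define F where "F m = mixl_aux k s h ((cube_index n r x)(k := m))" for m
  have IH: "mixL_aux k s (\<lambda>y. h (cube_index n r y)) y = c * mixl_aux k s h (cube_index n r y)" for y
    using Suc by (simp add: Suc.IH c_def)
  have "k < n"
    using Suc by simp
  then have "mixL_aux k s (\<lambda>y. h (cube_index n r y)) (x(k := t)) = c * F \<lfloor>t / r\<rfloor>" for t
    by (simp only: IH F_def cube_index_fun_upd)
  then have "mixL_aux (Suc k) s (\<lambda>y. h (cube_index n r y)) x = lq_norm lebesgue (s k) (\<lambda>t. c * F \<lfloor>t / r\<rfloor>)"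
    by (simp add: mixL_aux_Suc)
  also have "\<dots> = ennreal (r powr einv (s k)) * lq_norm (count_space UNIV) (s k) (\<lambda>m. c * F m)"
    using Suc.prems by (intro lq_norm_floor_divide r) auto
  also have "\<dots> = ennreal (r powr einv (s k)) * (c * lq_norm (count_space UNIV) (s k) F)"
    using Suc.prems by (subst lq_norm_cmult) (auto simp: c_def)
  also have "\<dots> = ennreal (r powr (\<Sum>i<Suc k. einv (s i))) * mixl_aux (Suc k) s h (cube_index n r x)"
    using r by (simp add: mixl_aux_Suc F_def[symmetric] c_def powr_add ennreal_mult' mult_ac)
  finally show ?case .
qed (use r in simp)

lemma mixL_step_function:
  "r > 0 \<Longrightarrow> \<forall>i<n. 1 \<le> s i \<Longrightarrow>
    mixL n s (\<lambda>y. h (cube_index n r y)) = ennreal (r powr (\<Sum>i<n. einv (s i))) * mixl n s h"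
  using mixL_aux_step_function[of r n s n h "origin n"]
  by (simp add: mixL_def mixl_def cube_index_origin)

lemma mem_cuben_iff_floor:
  "r > 0 \<Longrightarrow> x \<in> cuben n r k \<longleftrightarrow> x \<in> space (lborelN n) \<and> (\<forall>i<n. \<lfloor>x i / r\<rfloor> = k i)"
  by (simp add: cuben_def space_lborelN floor_divide_eq_iff)

lemma cuben_eq_PiE: "cuben n r k = PiE {..<n} (\<lambda>i. {r * of_int (k i) ..< r * (of_int (k i) + 1)})"
  by (simp add: cuben_def PiE_iff set_eq_iff) (meson lessThan_iff)

lemma sets_cuben [measurable]: "cuben n r k \<in> sets (lborelN n)"
  unfolding cuben_eq_PiE by (rule sets_PiM_I_finite) auto

lemma borel_measurable_step_function:
  assumes r: "r > 0"
  shows "(\<lambda>y. h (cube_index n r y)) \<in> borel_measurable (lborelN n)"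
proof -
  let ?K = "PiE {..<n} (\<lambda>_. UNIV :: int set)"
  have K: "countable ?K"
    by (rule countable_PiE) auto
  have "cube_index n r \<in> measurable (lborelN n) (count_space ?K)"
  proof (subst measurable_count_space_eq_countable)
    show "countable ?K"
      by (rule K)
    have "cube_index n r -` {k} \<inter> space (lborelN n) = cuben n r k" if "k \<in> ?K" for k
      using that r by (auto simp: mem_cuben_iff_floor cube_index_def fun_eq_iff PiE_iff extensional_def)
    then show "cube_index n r \<in> space (lborelN n) \<rightarrow> ?K \<and>
        (\<forall>k\<in>?K. cube_index n r -` {k} \<inter> space (lborelN n) \<in> sets (lborelN n))"
      by (auto simp: cube_index_def split: if_splits)
  qed
  from measurable_compose_countable'[where f="\<lambda>k _. h k", OF _ this K] show ?thesis
    by simp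
qed

text \<open>A discrete mixed norm is the continuous mixed norm of the corresponding step
  function with unit steps; this transfers the properties of \<^const>\<open>mixL\<close> to \<^const>\<open>mixl\<close>.\<close>

lemma mixl_eq_mixL_step_function:
  "\<forall>i<n. 1 \<le> s i \<Longrightarrow> mixl n s a = mixL n s (\<lambda>y. a (cube_index n 1 y))"
  by (simp add: mixL_step_function)

lemma mixl_mono: "(\<And>k. a k \<le> b k) \<Longrightarrow> \<forall>i<n. 1 \<le> s i \<Longrightarrow> mixl n s a \<le> mixl n s b"
  by (simp add: mixl_eq_mixL_step_function mixL_mono)

lemma mixl_cmult: "c < top \<Longrightarrow> \<forall>i<n. 1 \<le> s i \<Longrightarrow> mixl n s (\<lambda>k. c * a k) = c * mixl n s a"
  by (simp add: mixl_eq_mixL_step_function mixL_cmult borel_measurable_step_function)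

lemma mixl_sum_le:
  "finite S \<Longrightarrow> \<forall>i<n. 1 \<le> s i \<Longrightarrow>
    mixl n s (\<lambda>k. \<Sum>m\<in>S. a m k) \<le> (4 ^ n) ^ card S * (\<Sum>m\<in>S. mixl n s (a m))"
  by (simp add: mixl_eq_mixL_step_function mixL_sum_le borel_measurable_step_function)

lemma lq_norm_count_space_reindex_le:
  assumes "inj (\<psi> :: int \<Rightarrow> int)" "1 \<le> q"
  shows "lq_norm (count_space UNIV) q (\<lambda>t. H (\<psi> t)) \<le> lq_norm (count_space UNIV) q H"
proof (cases "q = top")
  case True
  then show ?thesis
    by (auto simp: lq_norm_def ess_sup_count_space intro!: SUP_least SUP_upper)
next
  case False
  define Q where "Q = enn2real q"
  have Q: "Q \<ge> 1"
    using enn2real_ge_1 assms False by (simp add: Q_def)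
  have "(\<integral>\<^sup>+ t. epow (H (\<psi> t)) Q \<partial>count_space UNIV) = (\<integral>\<^sup>+ u. epow (H u) Q \<partial>count_space (range \<psi>))"
    using nn_integral_bij_count_space[of \<psi> UNIV "range \<psi>" "\<lambda>u. epow (H u) Q"] assms(1)
    by (simp add: bij_betw_def)
  also have "\<dots> = (\<integral>\<^sup>+ u. epow (H u) Q * indicator (range \<psi>) u \<partial>count_space UNIV)"
    by (rule nn_integral_count_space_indicator) simp
  also have "\<dots> \<le> (\<integral>\<^sup>+ u. epow (H u) Q \<partial>count_space UNIV)"
    by (intro nn_integral_mono) (auto simp: indicator_def)
  finally show ?thesis
    using False Q by (auto simp: lq_norm_def Q_def intro!: epow_mono)
qed

definition reindex :: "(nat \<Rightarrow> int \<Rightarrow> int) \<Rightarrow> (nat \<Rightarrow> int) \<Rightarrow> (nat \<Rightarrow> int)" where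
  "reindex \<psi> z = (\<lambda>i. \<psi> i (z i))"

lemma reindex_fun_upd: "reindex \<psi> (z(k := t)) = (reindex \<psi> z)(k := \<psi> k t)"
  by (auto simp: reindex_def fun_eq_iff)

lemma mixl_aux_reindex_le:
  assumes "\<And>i. inj (\<psi> i)" "\<forall>i<k. 1 \<le> s i"
  shows "mixl_aux k s (\<lambda>z. a (reindex \<psi> z)) z \<le> mixl_aux k s a (reindex \<psi> z)"
  using assms(2)
proof (induction k arbitrary: z)
  case (Suc k)
  have "mixl_aux (Suc k) s (\<lambda>z. a (reindex \<psi> z)) z
      \<le> lq_norm (count_space UNIV) (s k) (\<lambda>t. mixl_aux k s a ((reindex \<psi> z)(k := \<psi> k t)))"
    unfolding mixl_aux_Suc using Suc
    by (intro lq_norm_mono) (auto simp: reindex_fun_upd[symmetric] intro: Suc.IH)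
  also have "\<dots> \<le> mixl_aux (Suc k) s a (reindex \<psi> z)"
    unfolding mixl_aux_Suc using Suc.prems by (intro lq_norm_count_space_reindex_le assms(1)) auto
  finally show ?case .
qed simp

lemma mixl_aux_cong_index:
  "(\<And>i. i \<ge> k \<Longrightarrow> z i = z' i) \<Longrightarrow> mixl_aux k s a z = mixl_aux k s a z'"
proof (induction k arbitrary: z z')
  case 0
  then have "z = z'"
    by auto
  then show ?case
    by simp
next
  case (Suc k)
  have "mixl_aux k s a (z(k := t)) = mixl_aux k s a (z'(k := t))" for t
    using Suc.prems by (intro Suc.IH) auto
  then show ?case
    by (simp add: mixl_aux_Suc)
qed

lemma mixl_reindex_le:
  assumes "\<And>i. inj (\<psi> i)" "\<forall>i<n. 1 \<le> s i" "\<And>i. i \<ge> n \<Longrightarrow> \<psi> i = id"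
  shows "mixl n s (\<lambda>z. a (reindex \<psi> z)) \<le> mixl n s a"
proof -
  have "mixl n s (\<lambda>z. a (reindex \<psi> z)) \<le> mixl_aux n s a (reindex \<psi> (origin n))"
    unfolding mixl_def by (rule mixl_aux_reindex_le[OF assms(1,2)])
  also have "\<dots> = mixl n s a"
    unfolding mixl_def by (rule mixl_aux_cong_index) (auto simp: reindex_def assms(3))
  finally show ?thesis .
qed

section \<open>Covering balls by cubes and cubes by smaller cubes\<close>

lemma sets_balln [measurable]: "balln n y r \<in> sets (lborelN n)"
proof -
  have "balln n y r = {x \<in> space (lborelN n). sqrt (\<Sum>i<n. (x i - y i)^2) < r}"
    by (simp add: balln_def space_lborelN)
  also have "\<dots> \<in> sets (lborelN n)"
    by measurable
  finally show ?thesis .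
qed

lemma balln_abs_diff_less:
  assumes "x \<in> balln n y r" "i < n"
  shows "\<bar>x i - y i\<bar> < r"
proof -
  have "sqrt ((x i - y i)^2) \<le> sqrt (\<Sum>i<n. (x i - y i)^2)"
    using assms(2) by (intro real_sqrt_le_mono member_le_sum) auto
  then show ?thesis
    using assms(1) by (simp add: balln_def)
qed

definition neighbour_offsets :: "nat \<Rightarrow> (nat \<Rightarrow> int) set" where
  "neighbour_offsets n = PiE {..<n} (\<lambda>_. {-1, 0, 1})"

lemma finite_neighbour_offsets: "finite (neighbour_offsets n)"
  unfolding neighbour_offsets_def by (rule finite_PiE) auto

definition shift_index :: "nat \<Rightarrow> (nat \<Rightarrow> int) \<Rightarrow> nat \<Rightarrow> int \<Rightarrow> int" where
  "shift_index n j = (\<lambda>i t. if i < n then t + j i else t)"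

lemma balln_subset_cubes:
  assumes r: "r > 0"
  shows "balln n y r \<subseteq> (\<Union>j\<in>neighbour_offsets n. cuben n r (reindex (shift_index n j) (cube_index n r y)))"
proof
  fix x
  assume x: "x \<in> balln n y r"
  define j where "j i = (if i < n then \<lfloor>x i / r\<rfloor> - \<lfloor>y i / r\<rfloor> else undefined)" for i
  have "\<lfloor>x i / r\<rfloor> - \<lfloor>y i / r\<rfloor> \<in> {-1, 0, 1}" if "i < n" for i
  proof -
    have "\<bar>x i / r - y i / r\<bar> < 1"
      using balln_abs_diff_less[OF x that] r by (simp add: diff_divide_distrib[symmetric] abs_divide)
    then have "\<lfloor>x i / r\<rfloor> \<le> \<lfloor>y i / r\<rfloor> + 1" "\<lfloor>y i / r\<rfloor> \<le> \<lfloor>x i / r\<rfloor> + 1"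
      by linarith+
    then show ?thesis
      by auto
  qed
  then have "j \<in> neighbour_offsets n"
    by (auto simp: neighbour_offsets_def j_def PiE_iff extensional_def)
  moreover have "x \<in> cuben n r (reindex (shift_index n j) (cube_index n r y))"
    using x r by (auto simp: mem_cuben_iff_floor reindex_def shift_index_def cube_index_def j_def balln_def space_lborelN)
  ultimately show "x \<in> (\<Union>j\<in>neighbour_offsets n. cuben n r (reindex (shift_index n j) (cube_index n r y)))"
    by blast
qed

lemma cuben_subset_balln:
  assumes n: "n \<ge> 1" and r: "r > 0"
  shows "cuben n (r / n) (cube_index n (r / n) y) \<subseteq> balln n y r"
proof
  fix x
  assume x: "x \<in> cuben n (r / n) (cube_index n (r / n) y)"
  define \<rho> where "\<rho> = r / n"
  have \<rho>: "\<rho> > 0"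
    using n r by (simp add: \<rho>_def)
  have dist: "\<bar>x i - y i\<bar> < \<rho>" if "i < n" for i
  proof -
    have "\<lfloor>x i / \<rho>\<rfloor> = \<lfloor>y i / \<rho>\<rfloor>"
      using x \<rho> that by (simp add: mem_cuben_iff_floor cube_index_def \<rho>_def)
    then have "\<bar>x i / \<rho> - y i / \<rho>\<bar> < 1"
      by linarith
    then show ?thesis
      using \<rho> by (simp add: diff_divide_distrib[symmetric] abs_divide)
  qed
  have "(\<Sum>i<n. (x i - y i)^2) < (\<Sum>i<n. \<rho>^2)"
  proof (rule sum_strict_mono)
    fix i
    assume "i \<in> {..<n}"
    then have "\<bar>x i - y i\<bar>^2 < \<rho>^2"
      using dist by (intro power_strict_mono) auto
    then show "(x i - y i)^2 < \<rho>^2"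
      by simp
  qed (use n in \<open>auto simp: lessThan_empty_iff\<close>)
  also have "\<dots> = r^2 / n"
    using n by (simp add: \<rho>_def power2_eq_square)
  also have "\<dots> \<le> r^2"
    using n r by (simp add: divide_le_eq)
  finally have "sqrt (\<Sum>i<n. (x i - y i)^2) < sqrt (r^2)"
    by (rule real_sqrt_less_mono)
  then show "x \<in> balln n y r"
    using x r by (simp add: balln_def cuben_def)
qed

definition subcube_offsets :: "nat \<Rightarrow> (nat \<Rightarrow> int) set" where
  "subcube_offsets n = PiE {..<n} (\<lambda>_. {0..<int n})"

lemma finite_subcube_offsets: "finite (subcube_offsets n)"
  unfolding subcube_offsets_def by (rule finite_PiE) auto

definition dilate_index :: "nat \<Rightarrow> (nat \<Rightarrow> int) \<Rightarrow> nat \<Rightarrow> int \<Rightarrow> int" where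
  "dilate_index n m = (\<lambda>i t. if i < n then int n * t + m i else t)"

lemma cuben_subset_subcubes:
  assumes n: "n \<ge> 1" and r: "r > 0"
  shows "cuben n r k \<subseteq> (\<Union>m\<in>subcube_offsets n. cuben n (r / n) (reindex (dilate_index n m) k))"
proof
  fix x
  assume x: "x \<in> cuben n r k"
  define \<rho> where "\<rho> = r / n"
  have \<rho>: "\<rho> > 0"
    using n r by (simp add: \<rho>_def)
  define m where "m i = (if i < n then \<lfloor>x i / \<rho>\<rfloor> - int n * k i else undefined)" for i
  have "0 \<le> m i \<and> m i < int n" if i: "i < n" for i
  proof -
    have k: "of_int (k i) \<le> x i / r" "x i / r < of_int (k i) + 1"
      using x i r by (auto simp: mem_cuben_iff_floor floor_eq_iff)
    have "real n * of_int (k i) \<le> real n * (x i / r)"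
      using k(1) by (rule mult_left_mono) simp
    moreover have "real n * (x i / r) < real n * (of_int (k i) + 1)"
      using k(2) n by (intro mult_strict_left_mono) auto
    moreover have "x i / \<rho> = real n * (x i / r)"
      using n by (simp add: \<rho>_def)
    ultimately have "of_int (int n * k i) \<le> x i / \<rho>" "x i / \<rho> < of_int (int n * k i + int n)"
      by (simp_all add: distrib_left)
    then have "int n * k i \<le> \<lfloor>x i / \<rho>\<rfloor>" "\<lfloor>x i / \<rho>\<rfloor> < int n * k i + int n"
      by (simp_all only: le_floor_iff floor_less_iff)
    then show ?thesis
      using i by (simp add: m_def)
  qed
  then have "m \<in> subcube_offsets n"
    by (auto simp: subcube_offsets_def m_def PiE_iff extensional_def)
  moreover have "x \<in> cuben n \<rho> (reindex (dilate_index n m) k)"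
    using x r \<rho> by (auto simp: mem_cuben_iff_floor reindex_def dilate_index_def m_def)
  ultimately show "x \<in> (\<Union>m\<in>subcube_offsets n. cuben n (r / n) (reindex (dilate_index n m) k))"
    by (auto simp: \<rho>_def)
qed

lemma measure_balln_bounds:
  assumes n: "n \<ge> 1" and r: "r > 0"
  shows "(r / n) ^ n \<le> measure (lebn n) (balln n y r) \<and> measure (lebn n) (balln n y r) \<le> (2 * r) ^ n"
proof -
  have box: "emeasure (lborelN n) (PiE {..<n} (\<lambda>i. {a i..<b i})) = ennreal (\<Prod>i<n. b i - a i)"
    if "\<And>i. i < n \<Longrightarrow> a i \<le> b i" for a b
    using that by (simp add: lborelN.emeasure_PiM) (rule prod_ennreal, use that in auto)
  define \<rho> where "\<rho> = r / n"
  have \<rho>: "\<rho> > 0"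
    using n r by (simp add: \<rho>_def)
  have "ennreal (\<rho> ^ n) = emeasure (lborelN n) (cuben n \<rho> (cube_index n \<rho> y))"
    using \<rho> by (simp add: cuben_eq_PiE box field_simps)
  also have "\<dots> \<le> emeasure (lborelN n) (balln n y r)"
    using cuben_subset_balln[OF n r] by (intro emeasure_mono) (auto simp: \<rho>_def)
  finally have lower: "ennreal (\<rho> ^ n) \<le> emeasure (lborelN n) (balln n y r)" .
  have "balln n y r \<subseteq> PiE {..<n} (\<lambda>i. {y i - r ..< y i + r})"
  proof
    fix x
    assume x: "x \<in> balln n y r"
    then have "x \<in> extensional {..<n}"
      by (simp add: balln_def PiE_iff)
    moreover have "\<forall>i\<in>{..<n}. x i \<in> {y i - r ..< y i + r}"
      using balln_abs_diff_less[OF x] by (force simp: abs_less_iff)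
    ultimately show "x \<in> PiE {..<n} (\<lambda>i. {y i - r ..< y i + r})"
      by (simp add: PiE_iff)
  qed
  then have "emeasure (lborelN n) (balln n y r) \<le> emeasure (lborelN n) (PiE {..<n} (\<lambda>i. {y i - r ..< y i + r}))"
    by (intro emeasure_mono sets_PiM_I_finite) auto
  also have "\<dots> = ennreal ((2 * r) ^ n)"
    using r by (simp add: box)
  finally have upper: "emeasure (lborelN n) (balln n y r) \<le> ennreal ((2 * r) ^ n)" .
  have "emeasure (lborelN n) (balln n y r) < top"
    using upper ennreal_less_top by (rule le_less_trans)
  then have "emeasure (lborelN n) (balln n y r) = ennreal (measure (lebn n) (balln n y r))"
    by (simp add: lebn_def measure_def ennreal_enn2real_if less_top[symmetric])
  then have "ennreal (\<rho> ^ n) \<le> ennreal (measure (lebn n) (balln n y r))"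
    "ennreal (measure (lebn n) (balln n y r)) \<le> ennreal ((2 * r) ^ n)"
    using lower upper by simp_all
  then show ?thesis
    using r by (simp add: \<rho>_def ennreal_le_iff)
qed

section \<open>Comparing the mixed norms over balls and over cubes\<close>

definition local_norm ::
    "nat \<Rightarrow> (nat \<Rightarrow> ennreal) \<Rightarrow> ((nat \<Rightarrow> real) \<Rightarrow> real) \<Rightarrow> (nat \<Rightarrow> real) set \<Rightarrow> ennreal" where
  "local_norm n p f A = mixL n p (\<lambda>x. ennreal \<bar>f x\<bar> * indicator A x)"

lemma normL_mult_indicator: "normL n p (\<lambda>x. f x * indicator A x) = local_norm n p f A"
proof -
  have "(\<lambda>x. ennreal \<bar>f x * indicator A x\<bar>) = (\<lambda>x. ennreal \<bar>f x\<bar> * indicator A x)"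
    by (auto simp: fun_eq_iff indicator_def)
  then show ?thesis
    by (simp add: normL_def local_norm_def)
qed

lemma local_norm_mono: "A \<subseteq> B \<Longrightarrow> \<forall>i<n. 1 \<le> p i \<Longrightarrow> local_norm n p f A \<le> local_norm n p f B"
  unfolding local_norm_def by (rule mixL_mono) (auto simp: indicator_def)

text \<open>Since \<open>f\<close> is only measurable for the completed measure, it is replaced by a Borel
  function outside a null set \<open>Z\<close>, whose contribution vanishes by \<open>mixL_null\<close>.\<close>

lemma local_norm_cover_le:
  assumes f: "f \<in> borel_measurable (lebn n)" and p: "\<forall>i<n. 1 \<le> p i"
    and S: "finite S" and B: "\<And>m. m \<in> S \<Longrightarrow> B m \<in> sets (lborelN n)"
    and cover: "A \<subseteq> (\<Union>m\<in>S. B m)"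
  shows "local_norm n p f A \<le> (4 ^ n * (4 ^ n) ^ card S) * (\<Sum>m\<in>S. local_norm n p f (B m))"
proof -
  let ?g = "\<lambda>x. ennreal \<bar>f x\<bar>"
  have "?g \<in> borel_measurable (completion (lborelN n))"
    using f unfolding lebn_def by measurable
  then obtain g' where g'[measurable]: "g' \<in> borel_measurable (lborelN n)"
    and "AE x in lborelN n. ?g x = g' x"
    by (blast dest: completion_ex_borel_measurable)
  then obtain Z where Z: "{x \<in> space (lborelN n). ?g x \<noteq> g' x} \<subseteq> Z"
    and Z_null: "emeasure (lborelN n) Z = 0" and [measurable]: "Z \<in> sets (lborelN n)"
    by (auto elim!: AE_E)
  define h where "h x = g' x * indicator (space (lborelN n) - Z) x" for x
  have [measurable]: "h \<in> borel_measurable (lborelN n)"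
    unfolding h_def by measurable
  have h_le: "h x \<le> ?g x" if "x \<in> space (lborelN n)" for x
    using Z that by (cases "x \<in> Z") (auto simp: h_def)
  have hB[measurable]: "(\<lambda>x. h x * indicator (B m) x) \<in> borel_measurable (lborelN n)" if "m \<in> S" for m
    using B[OF that] by measurable
  have "?g x * indicator A x \<le> (\<Sum>m\<in>S. h x * indicator (B m) x) + top * indicator Z x"
    if x: "x \<in> space (lborelN n)" for x
  proof (cases "x \<in> A \<and> x \<notin> Z")
    case True
    then obtain m where m: "m \<in> S" "x \<in> B m"
      using cover by auto
    have "?g x * indicator A x = h x * indicator (B m) x"
      using True Z x m by (auto simp: h_def)
    also have "\<dots> \<le> (\<Sum>m\<in>S. h x * indicator (B m) x)"
      using S m by (intro member_le_sum) auto
    finally show ?thesis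
      by (simp add: add_increasing2)
  qed auto
  then have "local_norm n p f A \<le> mixL n p (\<lambda>x. (\<Sum>m\<in>S. h x * indicator (B m) x) + top * indicator Z x)"
    unfolding local_norm_def using p by (rule mixL_mono)
  also have "\<dots> \<le> 4 ^ n * (mixL n p (\<lambda>x. \<Sum>m\<in>S. h x * indicator (B m) x) + mixL n p (\<lambda>x. top * indicator Z x))"
    unfolding mixL_def
    by (rule mixL_aux_add_le[OF _ _ p le_refl origin_in_space_lborelN]) (use hB in measurable)
  also have "mixL n p (\<lambda>x. top * indicator Z x) = 0"
    by (rule mixL_null) (use Z_null p in auto)
  also have "mixL n p (\<lambda>x. \<Sum>m\<in>S. h x * indicator (B m) x)
      \<le> (4 ^ n) ^ card S * (\<Sum>m\<in>S. mixL n p (\<lambda>x. h x * indicator (B m) x))"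
    using hB by (rule mixL_sum_le[OF S _ p])
  also have "(\<Sum>m\<in>S. mixL n p (\<lambda>x. h x * indicator (B m) x)) \<le> (\<Sum>m\<in>S. local_norm n p f (B m))"
    unfolding local_norm_def using p h_le by (intro sum_mono mixL_mono) (auto intro: mult_right_mono)
  finally show ?thesis
    by (simp add: mult.assoc mult_left_mono)
qed

lemma mixl_sum_reindex_le:
  assumes "finite S" "\<forall>i<n. 1 \<le> s i"
    and "\<And>m i. m \<in> S \<Longrightarrow> inj (\<psi> m i)" "\<And>m i. m \<in> S \<Longrightarrow> i \<ge> n \<Longrightarrow> \<psi> m i = id"
  shows "mixl n s (\<lambda>k. \<Sum>m\<in>S. a (reindex (\<psi> m) k)) \<le> ((4 ^ n) ^ card S * of_nat (card S)) * mixl n s a"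
proof -
  have "mixl n s (\<lambda>k. \<Sum>m\<in>S. a (reindex (\<psi> m) k))
      \<le> (4 ^ n) ^ card S * (\<Sum>m\<in>S. mixl n s (\<lambda>k. a (reindex (\<psi> m) k)))"
    using assms(1,2) by (rule mixl_sum_le)
  also have "(\<Sum>m\<in>S. mixl n s (\<lambda>k. a (reindex (\<psi> m) k))) \<le> (\<Sum>m\<in>S. mixl n s a)"
    using assms(2-) by (intro sum_mono mixl_reindex_le) auto
  finally show ?thesis
    by (simp add: mult.assoc mult_left_mono)
qed

text \<open>The constant for a cover by \<open>N\<close> sets: \<open>4\<^sup>n(4\<^sup>n)\<^sup>N\<close> from \<open>local_norm_cover_le\<close>
  and \<open>(4\<^sup>n)\<^sup>N N\<close> from \<open>mixl_sum_reindex_le\<close>.\<close>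

definition cover_const :: "nat \<Rightarrow> nat \<Rightarrow> ennreal" where
  "cover_const n N = (4 ^ n * (4 ^ n) ^ N) * ((4 ^ n) ^ N * of_nat N)"

lemma cover_const_less_top: "cover_const n N < top"
  by (simp add: cover_const_def ennreal_mult_less_top power_less_top_ennreal of_nat_less_top)

lemma mixL_balls_le_mixl_cubes:
  assumes p: "\<forall>i<n. 1 \<le> p i" and s: "\<forall>i<n. 1 \<le> s i" and f: "f \<in> borel_measurable (lebn n)"
    and r: "r > 0" and w: "\<And>y. w y \<le> ennreal c"
  shows "mixL n s (\<lambda>y. w y * local_norm n p f (balln n y r))
    \<le> ennreal c * cover_const n (card (neighbour_offsets n)) * ennreal (r powr (\<Sum>i<n. einv (s i)))
      * mixl n s (\<lambda>k. local_norm n p f (cuben n r k))"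
proof -
  define a where "a k = local_norm n p f (cuben n r k)" for k
  define J where "J = neighbour_offsets n"
  define K where "K = ennreal c * (4 ^ n * (4 ^ n) ^ card J)"
  have K: "K < top"
    by (simp add: K_def ennreal_mult_less_top power_less_top_ennreal)
  have "w y * local_norm n p f (balln n y r) \<le> K * (\<Sum>j\<in>J. a (reindex (shift_index n j) (cube_index n r y)))" for y
  proof -
    have "local_norm n p f (balln n y r) \<le> (4 ^ n * (4 ^ n) ^ card J) * (\<Sum>j\<in>J. a (reindex (shift_index n j) (cube_index n r y)))"
      unfolding J_def a_def using balln_subset_cubes[OF r]
      by (intro local_norm_cover_le[OF f p finite_neighbour_offsets]) auto
    then show ?thesis
      unfolding K_def using w[of y] by (simp add: mult.assoc mult_mono)
  qed
  then have "mixL n s (\<lambda>y. w y * local_norm n p f (balln n y r))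
      \<le> mixL n s (\<lambda>y. K * (\<Sum>j\<in>J. a (reindex (shift_index n j) (cube_index n r y))))"
    using s by (intro mixL_mono)
  also have "\<dots> = ennreal (r powr (\<Sum>i<n. einv (s i))) * mixl n s (\<lambda>k. K * (\<Sum>j\<in>J. a (reindex (shift_index n j) k)))"
    using mixL_step_function[OF r s] .
  also have "\<dots> = ennreal (r powr (\<Sum>i<n. einv (s i))) * (K * mixl n s (\<lambda>k. \<Sum>j\<in>J. a (reindex (shift_index n j) k)))"
    using K s by (simp add: mixl_cmult)
  also have "\<dots> \<le> ennreal (r powr (\<Sum>i<n. einv (s i))) * (K * (((4 ^ n) ^ card J * of_nat (card J)) * mixl n s a))"
    unfolding J_def using s
    by (intro mult_left_mono mixl_sum_reindex_le finite_neighbour_offsets) (auto simp: shift_index_def inj_def fun_eq_iff)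
  also have "\<dots> = ennreal c * cover_const n (card (neighbour_offsets n)) * ennreal (r powr (\<Sum>i<n. einv (s i)))
      * mixl n s (\<lambda>k. local_norm n p f (cuben n r k))"
    unfolding K_def cover_const_def J_def a_def by (simp add: mult_ac)
  finally show ?thesis .
qed

lemma mixl_cubes_le_mixL_balls:
  assumes n: "n \<ge> 1" and p: "\<forall>i<n. 1 \<le> p i" and s: "\<forall>i<n. 1 \<le> s i"
    and f: "f \<in> borel_measurable (lebn n)" and r: "r > 0" and w: "\<And>y. ennreal c \<le> w y"
  shows "ennreal c * ennreal ((r / n) powr (\<Sum>i<n. einv (s i))) * mixl n s (\<lambda>k. local_norm n p f (cuben n r k))
    \<le> cover_const n (card (subcube_offsets n)) * mixL n s (\<lambda>y. w y * local_norm n p f (balln n y r))"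
proof -
  define \<rho> where "\<rho> = r / n"
  have \<rho>: "\<rho> > 0"
    using n r by (simp add: \<rho>_def)
  define a where "a k = local_norm n p f (cuben n r k)" for k
  define b where "b k = local_norm n p f (cuben n \<rho> k)" for k
  define M where "M = subcube_offsets n"
  define K :: ennreal where "K = 4 ^ n * (4 ^ n) ^ card M"
  have "a k \<le> K * (\<Sum>m\<in>M. b (reindex (dilate_index n m) k))" for k
    unfolding K_def M_def a_def b_def \<rho>_def using cuben_subset_subcubes[OF n r]
    by (intro local_norm_cover_le[OF f p finite_subcube_offsets]) auto
  then have "mixl n s a \<le> mixl n s (\<lambda>k. K * (\<Sum>m\<in>M. b (reindex (dilate_index n m) k)))"
    using s by (intro mixl_mono)
  also have "\<dots> = K * mixl n s (\<lambda>k. \<Sum>m\<in>M. b (reindex (dilate_index n m) k))"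
    using s by (intro mixl_cmult) (simp add: K_def power_less_top_ennreal ennreal_mult_less_top)
  also have "\<dots> \<le> K * (((4 ^ n) ^ card M * of_nat (card M)) * mixl n s b)"
    unfolding M_def using s n
    by (intro mult_left_mono mixl_sum_reindex_le finite_subcube_offsets) (auto simp: dilate_index_def inj_def fun_eq_iff)
  also have "\<dots> = cover_const n (card M) * mixl n s b"
    by (simp add: cover_const_def K_def mult_ac)
  finally have a_le_b: "mixl n s a \<le> cover_const n (card M) * mixl n s b" .
  have "ennreal c * ennreal (\<rho> powr (\<Sum>i<n. einv (s i))) * mixl n s b = mixL n s (\<lambda>y. ennreal c * b (cube_index n \<rho> y))"
    using mixL_step_function[OF \<rho> s, of "\<lambda>k. ennreal c * b k"] mixl_cmult[OF ennreal_less_top s, of c b]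
    by (simp add: mult_ac)
  also have "\<dots> \<le> mixL n s (\<lambda>y. w y * local_norm n p f (balln n y r))"
    using s cuben_subset_balln[OF n r] unfolding b_def \<rho>_def
    by (intro mixL_mono mult_mono w local_norm_mono[OF _ p]) auto
  finally have b_le: "ennreal c * ennreal (\<rho> powr (\<Sum>i<n. einv (s i))) * mixl n s b
      \<le> mixL n s (\<lambda>y. w y * local_norm n p f (balln n y r))" .
  have "ennreal c * ennreal (\<rho> powr (\<Sum>i<n. einv (s i))) * mixl n s a
      \<le> ennreal c * ennreal (\<rho> powr (\<Sum>i<n. einv (s i))) * (cover_const n (card M) * mixl n s b)"
    using a_le_b by (rule mult_left_mono) simp
  also have "\<dots> = cover_const n (card M) * (ennreal c * ennreal (\<rho> powr (\<Sum>i<n. einv (s i))) * mixl n s b)"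
    by (simp add: mult_ac)
  also have "\<dots> \<le> cover_const n (card M) * mixL n s (\<lambda>y. w y * local_norm n p f (balln n y r))"
    using b_le by (rule mult_left_mono) simp
  finally show ?thesis
    unfolding M_def a_def \<rho>_def .
qed

section \<open>The weights and the proof of the theorem\<close>

lemma powr_between:
  fixes a b v e :: real
  assumes "0 < a" "a \<le> v" "v \<le> b"
  shows "min (a powr e) (b powr e) \<le> v powr e \<and> v powr e \<le> max (a powr e) (b powr e)"
proof (cases "e \<ge> 0")
  case True
  then have "a powr e \<le> v powr e" "v powr e \<le> b powr e"
    using assms by (auto intro!: powr_mono2)
  then show ?thesis
    by linarith
next
  case False
  then have "b powr e \<le> v powr e" "v powr e \<le> a powr e"
    using assms by (auto intro!: powr_mono2')
  then show ?thesis
    by linarith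
qed

lemma measure_balln_powr_bounds:
  fixes e :: real
  assumes n: "n \<ge> 1"
  obtains c C where "c > 0" "C > 0"
    "\<And>y r. r > 0 \<Longrightarrow> c * r powr (n * e) \<le> measure (lebn n) (balln n y r) powr e"
    "\<And>y r. r > 0 \<Longrightarrow> measure (lebn n) (balln n y r) powr e \<le> C * r powr (n * e)"
proof
  define c0 where "c0 = real n powr (- (n * e))"
  define C0 where "C0 = 2 powr (n * e)"
  show "min c0 C0 > 0" "max c0 C0 > 0"
    using n by (auto simp: c0_def C0_def less_max_iff_disj)
  fix y :: "nat \<Rightarrow> real" and r :: real
  assume r: "r > 0"
  have "((r / n) ^ n) powr e = (r / n) powr (n * e)"
    using r n by (simp add: powr_realpow[symmetric] powr_powr)
  also have "\<dots> = r powr (n * e) / real n powr (real n * e)"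
    using r by (simp add: powr_divide)
  also have "\<dots> = c0 * r powr (n * e)"
    by (simp add: c0_def powr_minus divide_inverse)
  finally have "((r / n) ^ n) powr e = c0 * r powr (n * e)" .
  moreover have "((2 * r) ^ n) powr e = C0 * r powr (n * e)"
    using r by (simp add: C0_def powr_realpow[symmetric] powr_powr powr_mult)
  ultimately have "min c0 C0 * r powr (n * e) \<le> measure (lebn n) (balln n y r) powr e \<and>
      measure (lebn n) (balln n y r) powr e \<le> max c0 C0 * r powr (n * e)"
    using powr_between[of "(r / n) ^ n" "measure (lebn n) (balln n y r)" "(2 * r) ^ n" e]
      measure_balln_bounds[OF n r, of y] n r
    by (simp add: min_mult_distrib_right max_mult_distrib_right)
  then show "min c0 C0 * r powr (n * e) \<le> measure (lebn n) (balln n y r) powr e"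
    "measure (lebn n) (balln n y r) powr e \<le> max c0 C0 * r powr (n * e)"
    by auto
qed

lemma SUP_less_top_iff_of_le_mult:
  fixes F G :: "'a \<Rightarrow> ennreal"
  assumes "\<And>r. r \<in> R \<Longrightarrow> F r \<le> K * G r" "\<And>r. r \<in> R \<Longrightarrow> G r \<le> L * F r" "K < top" "L < top"
  shows "(SUP r\<in>R. F r) < top \<longleftrightarrow> (SUP r\<in>R. G r) < top"
proof -
  have less_top: "(SUP r\<in>R. F' r) < top"
    if "\<And>r. r \<in> R \<Longrightarrow> F' r \<le> K' * G' r" "K' < top" "(SUP r\<in>R. G' r) < top"
    for F' G' :: "'a \<Rightarrow> ennreal" and K'
  proof -
    have "(SUP r\<in>R. F' r) \<le> K' * (SUP r\<in>R. G' r)"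
    proof (rule SUP_least)
      fix r
      assume "r \<in> R"
      then have "K' * G' r \<le> K' * (SUP r\<in>R. G' r)"
        by (intro mult_left_mono SUP_upper) auto
      then show "F' r \<le> K' * (SUP r\<in>R. G' r)"
        by (rule order_trans[OF that(1)[OF \<open>r \<in> R\<close>]])
    qed
    also have "\<dots> < top"
      using that(2,3) by (simp add: ennreal_mult_less_top)
    finally show ?thesis .
  qed
  show ?thesis
    using less_top[of F K G] less_top[of G L F] assms by blast
qed

lemma ennreal_le_divide_of_mult_le:
  assumes "a > 0" "ennreal a * x \<le> y"
  shows "x \<le> ennreal (1 / a) * y"
proof -
  have "x = ennreal (1 / a) * (ennreal a * x)"
    using assms(1) by (simp add: mult.assoc[symmetric] ennreal_mult[symmetric])
  also have "\<dots> \<le> ennreal (1 / a) * y"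
    using assms(2) by (rule mult_left_mono) simp
  finally show ?thesis .
qed

lemma SUP_mixL_balls_less_top_iff:
  fixes e :: real
  assumes n: "n \<ge> 1" and p: "\<forall>i<n. 1 \<le> p i" and s: "\<forall>i<n. 1 \<le> s i"
    and f: "f \<in> borel_measurable (lebn n)" and R: "R \<subseteq> {0<..}"
  defines "\<sigma> \<equiv> \<Sum>i<n. einv (s i)"
  shows "(SUP r\<in>R. mixL n s (\<lambda>y. ennreal (measure (lebn n) (balln n y r) powr e) * local_norm n p f (balln n y r)))
      < top
    \<longleftrightarrow> (SUP r\<in>R. ennreal (r powr (n * e + \<sigma>)) * mixl n s (\<lambda>k. local_norm n p f (cuben n r k))) < top"
proof -
  obtain c C where c: "c > 0" "C > 0"
    and lower: "\<And>y r. r > 0 \<Longrightarrow> c * r powr (n * e) \<le> measure (lebn n) (balln n y r) powr e"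
    and upper: "\<And>y r. r > 0 \<Longrightarrow> measure (lebn n) (balln n y r) powr e \<le> C * r powr (n * e)"
    using measure_balln_powr_bounds[OF n] by metis
  let ?M = "\<lambda>r. mixl n s (\<lambda>k. local_norm n p f (cuben n r k))"
  let ?B = "\<lambda>r. mixL n s (\<lambda>y. ennreal (measure (lebn n) (balln n y r) powr e) * local_norm n p f (balln n y r))"
  have balls_le: "?B r \<le> (ennreal C * cover_const n (card (neighbour_offsets n))) * (ennreal (r powr (n * e + \<sigma>)) * ?M r)"
    if r: "r > 0" for r
  proof -
    have "?B r \<le> ennreal (C * r powr (n * e)) * cover_const n (card (neighbour_offsets n)) * ennreal (r powr \<sigma>) * ?M r"
      unfolding \<sigma>_def using upper[OF r] by (intro mixL_balls_le_mixl_cubes[OF p s f r] ennreal_leI)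
    also have "\<dots> = (ennreal C * cover_const n (card (neighbour_offsets n))) * (ennreal (r powr (n * e + \<sigma>)) * ?M r)"
      using c r by (simp add: powr_add ennreal_mult mult_ac)
    finally show ?thesis .
  qed
  have cubes_le: "ennreal (r powr (n * e + \<sigma>)) * ?M r
      \<le> (ennreal (1 / (c / n powr \<sigma>)) * cover_const n (card (subcube_offsets n))) * ?B r"
    if r: "r > 0" for r
  proof -
    have "c / n powr \<sigma> * r powr (n * e + \<sigma>) = c * r powr (n * e) * (r / n) powr \<sigma>"
      using r by (simp add: powr_add powr_divide)
    then have "ennreal (c / n powr \<sigma>) * (ennreal (r powr (n * e + \<sigma>)) * ?M r)
        = ennreal (c * r powr (n * e)) * ennreal ((r / n) powr \<sigma>) * ?M r"
      using c by (simp add: ennreal_mult'[symmetric] mult.assoc[symmetric])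
    also have "\<dots> \<le> cover_const n (card (subcube_offsets n)) * ?B r"
      unfolding \<sigma>_def using lower[OF r] by (intro mixl_cubes_le_mixL_balls[OF n p s f r] ennreal_leI)
    finally show ?thesis
      using c n by (subst mult.assoc, intro ennreal_le_divide_of_mult_le) auto
  qed
  show ?thesis
  proof (rule SUP_less_top_iff_of_le_mult)
    fix r
    assume "r \<in> R"
    then have "r > 0"
      using R by auto
    then show "?B r \<le> (ennreal C * cover_const n (card (neighbour_offsets n))) * (ennreal (r powr (n * e + \<sigma>)) * ?M r)"
      "ennreal (r powr (n * e + \<sigma>)) * ?M r
        \<le> (ennreal (1 / (c / n powr \<sigma>)) * cover_const n (card (subcube_offsets n))) * ?B r"
      by (rule balls_le, rule cubes_le)
  qed (simp_all add: cover_const_less_top ennreal_mult_less_top)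
qed

theorem proposition2p5:
  fixes n :: nat and p s :: "nat \<Rightarrow> ennreal" and \<alpha> :: ennreal
  assumes "n \<ge> 1"
    and "\<forall>i<n. 1 \<le> p i" and "\<forall>i<n. 1 \<le> s i"
    and "1 \<le> \<alpha>"
    and "(\<Sum>i<n. einv (s i)) / real n \<le> einv \<alpha>"
    and "einv \<alpha> \<le> (\<Sum>i<n. einv (p i)) / real n"
  shows "amalgamLL n p s = amalgamLl n p s \<and> amalgamLL_alpha n p s \<alpha> = amalgamLl_alpha n p s \<alpha>"
proof -
  let ?e = "einv \<alpha> - (\<Sum>i<n. einv (p i)) / n - (\<Sum>i<n. einv (s i)) / n"
  have exponent: "n * ?e + (\<Sum>i<n. einv (s i)) = n * einv \<alpha> - (\<Sum>i<n. einv (p i))"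
    using assms(1) by (simp add: field_simps)
  have "0 < (1 / real n) ^ n"
    using assms(1) by simp
  then have ball_nonnull: "measure (lebn n) (balln n y 1) \<noteq> 0" for y
    using measure_balln_bounds[OF assms(1), of 1 y] by auto
  have "f \<in> amalgamLL n p s \<longleftrightarrow> f \<in> amalgamLl n p s" for f
    using SUP_mixL_balls_less_top_iff[OF assms(1-3), of f "{1}" 0]
    by (auto simp: amalgamLL_def amalgamLl_def L1_loc_def normL_mult_indicator rnorm_def ball_nonnull)
  moreover have "f \<in> amalgamLL_alpha n p s \<alpha> \<longleftrightarrow> f \<in> amalgamLl_alpha n p s \<alpha>" for f
    using SUP_mixL_balls_less_top_iff[OF assms(1-3), of f "{0<..}" ?e]
    by (auto simp: amalgamLL_alpha_def amalgamLl_alpha_def L1_loc_def normL_mult_indicator rnorm_def exponent)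
  ultimately show ?thesis
    by blast
qed

end
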